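(* Consider the equation $u_{tx}=u-i|u|^2u_x$. Let $k,\Omega\in\mathbb{R}$ and let $\varphi,\theta:\mathbb{R}\to\mathbb{R}$ be $C^2$ functions such that $u(x,t)=\varphi(x)e^{i(kx-\Omega t+\theta(x))}$ (i.e. a traveling wave of the form $\varphi(x-ct)e^{i(kx-\Omega t+\theta(x-ct))}$ with speed $c=0$) is a solution. Then $\varphi$ is constant. If moreover this constant is nonzero, then $\Omega\neq\varphi^2$ and $\theta_x$ is constant, given by $$\theta_x=\frac{k\varphi^2-k\Omega+1}{\Omega-\varphi^2}.$$ *)

theory Defs
  imports "HOL-Analysis.Analysis"
begin

definition C2 :: "(real \<Rightarrow> real) \<Rightarrow> bool" where
  "C2 f \<longleftrightarrow> f differentiable_on UNIV \<and> (deriv f) differentiable_on UNIV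
      \<and> continuous_on UNIV (deriv (deriv f))"

definition pdx :: "(real \<Rightarrow> real \<Rightarrow> complex) \<Rightarrow> real \<Rightarrow> real \<Rightarrow> complex" where
  "pdx u x t = vector_derivative (\<lambda>y. u y t) (at x)"

definition pdt :: "(real \<Rightarrow> real \<Rightarrow> complex) \<Rightarrow> real \<Rightarrow> real \<Rightarrow> complex" where
  "pdt u x t = vector_derivative (\<lambda>s. u x s) (at t)"

definition solves_eq :: "(real \<Rightarrow> real \<Rightarrow> complex) \<Rightarrow> bool" where
  "solves_eq u \<longleftrightarrow>
     (\<forall>x t. (\<lambda>y. u y t) differentiable (at x)) \<and>
     (\<forall>x t. (\<lambda>s. pdx u x s) differentiable (at t)) \<and>
     (\<forall>x t. pdt (pdx u) x t = u x t - \<i> * complex_of_real ((cmod (u x t))\<^sup>2) * pdx u x t)"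

end

theory Submission imports Defs begin

(* For the wave  u(x,t) = phi(x) e^{i(kx - Omega t + theta(x))}  both partial
   derivatives are explicit: u_x = A(x) E(x,t) with the complex amplitude
   A = phi' + i phi (k + theta') and the phase factor E = e^{i(kx - Omega t + theta)}, and
   u_tx = -i Omega A E.  Since |u| = |phi| and E never vanishes, the equation
   u_tx = u - i|u|^2 u_x reduces to the profile equation  -i Omega A = phi - i phi^2 A,
   whose imaginary and real parts are
       Omega phi' = phi^2 phi'      and      Omega phi w = phi + phi^3 w   (w = k + theta').
   The real part forces Omega <> phi^2 wherever phi <> 0; then the imaginary part gives
   phi phi' = 0 everywhere, so phi^2 and hence phi is constant.  For a nonzero constant c
   the real part yields w = 1 / (Omega - c^2), which is the stated formula for theta'. *)

definition traveling_wave ::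
  "real \<Rightarrow> real \<Rightarrow> (real \<Rightarrow> real) \<Rightarrow> (real \<Rightarrow> real) \<Rightarrow> real \<Rightarrow> real \<Rightarrow> complex" where
  "traveling_wave k \<Omega> \<phi> \<theta> x t =
     complex_of_real (\<phi> x) * exp (\<i> * complex_of_real (k * x - \<Omega> * t + \<theta> x))"

lemma C2_has_real_derivative:
  assumes "C2 f"
  shows "(f has_real_derivative deriv f x) (at x)"
  using assms unfolding C2_def
  by (meson DERIV_deriv_iff_real_differentiable UNIV_I differentiable_on_def differentiable_at_withinI)

lemma has_vector_derivative_exp_i_real:
  assumes "(g has_real_derivative g') (at y)"
  shows "((\<lambda>y. exp (\<i> * complex_of_real (g y))) has_vector_derivative
           (\<i> * complex_of_real g' * exp (\<i> * complex_of_real (g y)))) (at y)"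
proof -
  have "((\<lambda>y. \<i> * complex_of_real (g y)) has_vector_derivative (\<i> * complex_of_real g')) (at y)"
    using has_vector_derivative_mult_right[OF has_vector_derivative_of_real[OF assms], of \<i>] by simp
  then have "((exp \<circ> (\<lambda>y. \<i> * complex_of_real (g y))) has_vector_derivative
           (\<i> * complex_of_real g' * exp (\<i> * complex_of_real (g y)))) (at y)"
    by (rule field_vector_diff_chain_at) (rule DERIV_exp)
  then show ?thesis by (simp add: o_def)
qed

lemma traveling_wave_pdx:
  assumes "C2 \<phi>" and "C2 \<theta>"
  shows "pdx (traveling_wave k \<Omega> \<phi> \<theta>) x t =
           (complex_of_real (deriv \<phi> x) + \<i> * complex_of_real (\<phi> x * (k + deriv \<theta> x)))
           * exp (\<i> * complex_of_real (k * x - \<Omega> * t + \<theta> x))"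
proof -
  have phase: "((\<lambda>y. k * y - \<Omega> * t + \<theta> y) has_real_derivative (k + deriv \<theta> x)) (at x)"
    using C2_has_real_derivative[OF assms(2)] by (auto intro!: derivative_eq_intros)
  have "((\<lambda>y. traveling_wave k \<Omega> \<phi> \<theta> y t) has_vector_derivative
           (complex_of_real (deriv \<phi> x) + \<i> * complex_of_real (\<phi> x * (k + deriv \<theta> x)))
           * exp (\<i> * complex_of_real (k * x - \<Omega> * t + \<theta> x))) (at x)"
    using has_vector_derivative_mult[OF
        has_vector_derivative_of_real[OF C2_has_real_derivative[OF assms(1)]]
        has_vector_derivative_exp_i_real[OF phase]]
    by (simp add: traveling_wave_def algebra_simps)
  then show ?thesis unfolding pdx_def by (rule vector_derivative_at)
qed

lemma traveling_wave_pdt_pdx: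
  assumes "C2 \<phi>" and "C2 \<theta>"
  shows "pdt (pdx (traveling_wave k \<Omega> \<phi> \<theta>)) x t =
           - \<i> * complex_of_real \<Omega> * pdx (traveling_wave k \<Omega> \<phi> \<theta>) x t"
proof -
  define A where "A = complex_of_real (deriv \<phi> x) + \<i> * complex_of_real (\<phi> x * (k + deriv \<theta> x))"
  have phase: "((\<lambda>s. k * x - \<Omega> * s + \<theta> x) has_real_derivative (- \<Omega>)) (at t)"
    by (auto intro!: derivative_eq_intros)
  have "((\<lambda>s. pdx (traveling_wave k \<Omega> \<phi> \<theta>) x s) has_vector_derivative
           - \<i> * complex_of_real \<Omega> * pdx (traveling_wave k \<Omega> \<phi> \<theta>) x t) (at t)"
    using has_vector_derivative_mult_right[OF has_vector_derivative_exp_i_real[OF phase], of A]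
    by (simp add: traveling_wave_pdx[OF assms] A_def algebra_simps)
  then show ?thesis unfolding pdt_def by (rule vector_derivative_at)
qed

(* Reduction of the PDE to two real ODE relations: the real and imaginary parts of
   -i Omega A = phi - i phi^2 A, after cancelling the nonvanishing phase factor. *)
lemma traveling_wave_profile_equations:
  assumes "C2 \<phi>" and "C2 \<theta>" and "solves_eq (traveling_wave k \<Omega> \<phi> \<theta>)"
  shows "\<Omega> * \<phi> x * (k + deriv \<theta> x) = \<phi> x + \<phi> x ^ 3 * (k + deriv \<theta> x)"
    and "\<Omega> * deriv \<phi> x = \<phi> x ^ 2 * deriv \<phi> x"
proof -
  define A where "A = complex_of_real (deriv \<phi> x) + \<i> * complex_of_real (\<phi> x * (k + deriv \<theta> x))"
  define E where "E = exp (\<i> * complex_of_real (k * x - \<Omega> * 0 + \<theta> x))"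
  have modulus: "cmod (traveling_wave k \<Omega> \<phi> \<theta> x 0) = \<bar>\<phi> x\<bar>"
    unfolding traveling_wave_def norm_mult by (simp add: norm_exp_i_times)
  have "pdt (pdx (traveling_wave k \<Omega> \<phi> \<theta>)) x 0 = traveling_wave k \<Omega> \<phi> \<theta> x 0
          - \<i> * complex_of_real ((cmod (traveling_wave k \<Omega> \<phi> \<theta> x 0))\<^sup>2) * pdx (traveling_wave k \<Omega> \<phi> \<theta>) x 0"
    using assms(3) unfolding solves_eq_def by blast
  then have "(- \<i> * complex_of_real \<Omega> * A) * E = (complex_of_real (\<phi> x) - \<i> * complex_of_real (\<phi> x ^ 2) * A) * E"
    unfolding traveling_wave_pdt_pdx[OF assms(1,2)] traveling_wave_pdx[OF assms(1,2)] modulus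
    by (simp add: traveling_wave_def A_def E_def algebra_simps)
  moreover have "E \<noteq> 0" by (simp add: E_def)
  ultimately have profile: "- \<i> * complex_of_real \<Omega> * A = complex_of_real (\<phi> x) - \<i> * complex_of_real (\<phi> x ^ 2) * A"
    using mult_right_cancel by blast
  show "\<Omega> * \<phi> x * (k + deriv \<theta> x) = \<phi> x + \<phi> x ^ 3 * (k + deriv \<theta> x)"
    using arg_cong[OF profile, of Re] by (simp add: A_def power2_eq_square power3_eq_cube algebra_simps)
  show "\<Omega> * deriv \<phi> x = \<phi> x ^ 2 * deriv \<phi> x"
    using arg_cong[OF profile, of Im] by (simp add: A_def algebra_simps)
qed

(* A differentiable real function with f f' = 0 everywhere is constant: f^2 is constant,
   and if f is not identically zero it never vanishes, so f' = 0. *)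
lemma constant_if_mult_deriv_zero:
  fixes f f' :: "real \<Rightarrow> real"
  assumes deriv: "\<And>x. (f has_real_derivative f' x) (at x)"
    and zero: "\<And>x. f x * f' x = 0"
  shows "f x = f y"
proof -
  have "\<forall>z. ((\<lambda>x. (f x)\<^sup>2) has_real_derivative 0) (at z)"
    using deriv zero by (auto intro!: derivative_eq_intros simp: algebra_simps)
  then have square_const: "(f z)\<^sup>2 = (f 0)\<^sup>2" for z
    by (rule DERIV_isconst_all)
  have "f z = f 0" for z
  proof (cases "f 0 = 0")
    case True
    then show ?thesis using square_const[of z] by simp
  next
    case False
    have "\<forall>w. (f has_real_derivative 0) (at w)"
    proof
      fix w
      have "f w \<noteq> 0" using square_const[of w] False by auto
      then show "(f has_real_derivative 0) (at w)" using deriv[of w] zero[of w] by simp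
    qed
    then show ?thesis by (rule DERIV_isconst_all)
  qed
  then show ?thesis by metis
qed

lemma profile_frequency_gap:
  fixes \<Omega> p w :: real
  assumes "\<Omega> * p * w = p + p ^ 3 * w" and "p \<noteq> 0"
  shows "\<Omega> \<noteq> p\<^sup>2"
  using assms by (auto simp: power2_eq_square power3_eq_cube algebra_simps)

lemma profile_phase_speed:
  fixes \<Omega> p k w :: real
  assumes "\<Omega> * p * (k + w) = p + p ^ 3 * (k + w)" and "p \<noteq> 0"
  shows "w = (k * p\<^sup>2 - k * \<Omega> + 1) / (\<Omega> - p\<^sup>2)"
proof -
  have gap: "\<Omega> - p\<^sup>2 \<noteq> 0" using profile_frequency_gap[OF assms] by simp
  have "p * ((\<Omega> - p\<^sup>2) * (k + w) - 1) = 0"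
    using assms(1) by (simp add: power2_eq_square power3_eq_cube algebra_simps)
  then have "(\<Omega> - p\<^sup>2) * (k + w) = 1" using assms(2) by simp
  then show ?thesis using gap by (simp add: field_simps)
qed

theorem mainTheorem6:
  fixes k \<Omega> :: real and \<phi> \<theta> :: "real \<Rightarrow> real"
  assumes "C2 \<phi>" and "C2 \<theta>"
    and "solves_eq (\<lambda>x t. complex_of_real (\<phi> x) * exp (\<i> * complex_of_real (k * x - \<Omega> * t + \<theta> x)))"
  shows "\<exists>c. (\<forall>x. \<phi> x = c) \<and>
           (c \<noteq> 0 \<longrightarrow> \<Omega> \<noteq> c\<^sup>2 \<and>
              (\<forall>x. deriv \<theta> x = (k * c\<^sup>2 - k * \<Omega> + 1) / (\<Omega> - c\<^sup>2)))"
proof -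
  have sol: "solves_eq (traveling_wave k \<Omega> \<phi> \<theta>)"
    using assms(3) by (simp add: traveling_wave_def[abs_def])
  note real_part = traveling_wave_profile_equations(1)[OF assms(1,2) sol]
  note imag_part = traveling_wave_profile_equations(2)[OF assms(1,2) sol]
  have "\<phi> x * deriv \<phi> x = 0" for x
    using imag_part[of x] profile_frequency_gap[OF real_part[of x]] by (cases "\<phi> x = 0") auto
  then have const: "\<phi> x = \<phi> 0" for x
    using constant_if_mult_deriv_zero[OF C2_has_real_derivative[OF assms(1)]] by blast
  show ?thesis
  proof (intro exI conjI allI impI)
    show "\<phi> x = \<phi> 0" for x by (rule const)
    assume "\<phi> 0 \<noteq> 0"
    then show "\<Omega> \<noteq> (\<phi> 0)\<^sup>2"
      using profile_frequency_gap[OF real_part[of 0]] by blast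
    show "deriv \<theta> x = (k * (\<phi> 0)\<^sup>2 - k * \<Omega> + 1) / (\<Omega> - (\<phi> 0)\<^sup>2)" for x
      using profile_phase_speed[of \<Omega> "\<phi> 0" k "deriv \<theta> x"] real_part[of x] const[of x] \<open>\<phi> 0 \<noteq> 0\<close>
      by simp
  qed
qed

end
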